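(* Assume (A1)–(A3) below. For any $\mathcal M\subset[n]$, \[ \hat{\boldsymbol\beta}_{\setminus\mathcal M}-\hat{\boldsymbol\beta}=\bar{\mathbf G}^{-1}\Big(\sum_{i\in\mathcal M}\dot\ell_i(\hat{\boldsymbol\beta}_{\setminus\mathcal M})\mathbf x_i\Big)=\bar{\mathbf G}_{\setminus\mathcal M}^{-1}\Big(\sum_{i\in\mathcal M}\dot\ell_i(\hat{\boldsymbol\beta})\mathbf x_i\Big), \] where $\bar{\mathbf G}=\int_0^1\mathbf G(t\hat{\boldsymbol\beta}+(1-t)\hat{\boldsymbol\beta}_{\setminus\mathcal M})\,dt$ and $\bar{\mathbf G}_{\setminus\mathcal M}=\int_0^1\mathbf G_{\setminus\mathcal M}(t\hat{\boldsymbol\beta}+(1-t)\hat{\boldsymbol\beta}_{\setminus\mathcal M})\,dt$, with $\mathbf G(\boldsymbol\beta)=\mathbf X^\top\mathrm{diag}[\ddot\ell_i(\boldsymbol\beta)]_{i\in[n]}\mathbf X+\lambda\,\mathrm{diag}[\ddot r_k(\beta_k)]_{k\in[p]}$ and $\mathbf G_{\setminus\mathcal M}(\boldsymbol\beta)=\mathbf X_{\setminus\mathcal M}^\top\mathrm{diag}[\ddot\ell_i(\boldsymbol\beta)]_{i\notin\mathcal M}\mathbf X_{\setminus\mathcal M}+\lambda\,\mathrm{diag}[\ddot r_k(\beta_k)]_{k\in[p]}$.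
   Context: Data $\{(y_i,\mathbf x_i)\}_{i=1}^n$, $\mathbf x_i\in\mathbb R^p$; $\mathbf X\in\mathbb R^{n\times p}$ has rows $\mathbf x_i^\top$ and $\mathbf X_{\setminus\mathcal M}$ consists of the rows with $i\notin\mathcal M$. Loss $\ell(y|z)\ge0$ with derivatives $\dot\ell,\ddot\ell$ in $z$; $\ell_i(\boldsymbol\beta)=\ell(y_i|\mathbf x_i^\top\boldsymbol\beta)$, $\dot\ell_i(\boldsymbol\beta)=\dot\ell(y_i|\mathbf x_i^\top\boldsymbol\beta)$, $\ddot\ell_i$ similarly. $\lambda>0$. $\hat{\boldsymbol\beta}=\arg\min_{\boldsymbol\beta}\sum_{i=1}^n\ell_i(\boldsymbol\beta)+\lambda r(\boldsymbol\beta)$ and $\hat{\boldsymbol\beta}_{\setminus\mathcal M}=\arg\min_{\boldsymbol\beta}\sum_{i\notin\mathcal M}\ell_i(\boldsymbol\beta)+\lambda r(\boldsymbol\beta)$. Assumptions: (A1) $r(\boldsymbol\beta)=\sum_{k=1}^pr_k(\beta_k)$, $r\ge0$; (A2) $\ell$ (in $z$) and $r$ are twice differentiable; (A3) $\ell$ and $r$ are proper convex and $r$ is $\nu$-strongly convex for a constant $\nu>0$. *)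

theory Defs
  imports "HOL-Analysis.Analysis"
begin

definition diag_mat :: "real^'k \<Rightarrow> real^'k^'k" where
  "diag_mat d = (\<chi> j k. if j = k then d $ j else 0)"

definition outer :: "real^'k \<Rightarrow> real^'k^'k" where
  "outer x = (\<chi> j k. x $ j * x $ k)"

definition sep_pen :: "('p::finite \<Rightarrow> real \<Rightarrow> real) \<Rightarrow> real^'p \<Rightarrow> real" where
  "sep_pen rk \<beta> = (\<Sum>k\<in>UNIV. rk k (\<beta> $ k))"

definition objective ::
  "('y \<Rightarrow> real \<Rightarrow> real) \<Rightarrow> ('p::finite \<Rightarrow> real \<Rightarrow> real) \<Rightarrow> real \<Rightarrow>
   ('n::finite \<Rightarrow> 'y) \<Rightarrow> real^'p^'n \<Rightarrow> 'n set \<Rightarrow> real^'p \<Rightarrow> real" where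
  "objective l rk lam y X S \<beta> =
     (\<Sum>i\<in>S. l (y i) (X $ i \<bullet> \<beta>)) + lam * sep_pen rk \<beta>"

text \<open>Hessian-type matrix using rows in S:
  X_S^T diag[l''_i(beta)]_{i in S} X_S + lambda diag[r_k''(beta_k)]
  = sum_{i in S} l''_i(beta) x_i x_i^T + lambda diag[r_k''(beta_k)].\<close>
definition Gmat ::
  "('y \<Rightarrow> real \<Rightarrow> real) \<Rightarrow> ('p::finite \<Rightarrow> real \<Rightarrow> real) \<Rightarrow> real \<Rightarrow>
   ('n::finite \<Rightarrow> 'y) \<Rightarrow> real^'p^'n \<Rightarrow> 'n set \<Rightarrow> real^'p \<Rightarrow> real^'p^'p" where
  "Gmat l2 r2 lam y X S \<beta> =
     (\<Sum>i\<in>S. l2 (y i) (X $ i \<bullet> \<beta>) *\<^sub>R outer (X $ i))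
     + lam *\<^sub>R diag_mat (\<chi> k. r2 k (\<beta> $ k))"

definition strongly_convex :: "real \<Rightarrow> ('a::real_normed_vector \<Rightarrow> real) \<Rightarrow> bool" where
  "strongly_convex \<nu> f \<longleftrightarrow>
     (\<forall>a b. \<forall>t\<in>{0..1}. f (t *\<^sub>R a + (1 - t) *\<^sub>R b)
        \<le> t * f a + (1 - t) * f b - \<nu> / 2 * t * (1 - t) * (norm (a - b))\<^sup>2)"

end

theory Submission
  imports Defs
begin

text \<open>
  Let g_S(b) = sum_{i in S} l'_i(b) x_i + lam grad r(b) be the gradient of the objective on the
  observations S. Both estimators are stationary points: g_[n](bh) = 0 and g_{-M}(bM) = 0.
  As G_S is the derivative of g_S, the fundamental theorem of calculus along the segment from bh
  to bM gives Gbar_S (bM - bh) = g_S(bM) - g_S(bh); splitting g_[n] = g_{-M} + sum_{i in M}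
  turns the right-hand side into the sums over M, for S = [n] and for S = -M alike.
  Convexity of l gives l'' >= 0 and nu-strong convexity of the separable r gives r_k'' >= nu,
  so G_S(b) >= lam nu I everywhere and the averaged matrices are invertible.
\<close>

subsection \<open>Second derivatives of convex functions\<close>

lemma convex_on_UNIV_deriv_mono:
  fixes g g' :: "real \<Rightarrow> real"
  assumes convex: "convex_on UNIV g" and deriv: "\<And>z. (g has_real_derivative g' z) (at z)"
  shows "mono g'"
proof (rule monoI)
  fix x w :: real
  assume "x \<le> w"
  have "g w - g x \<ge> g' x * (w - x)"
    by (rule convex_on_imp_above_tangent[OF convex]) (auto simp: deriv)
  moreover have "g x - g w \<ge> g' w * (x - w)"
    by (rule convex_on_imp_above_tangent[OF convex]) (auto simp: deriv)
  ultimately have "(g' w - g' x) * (w - x) \<ge> 0"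
    by (simp add: algebra_simps)
  with \<open>x \<le> w\<close> show "g' x \<le> g' w"
    by (cases "x = w") (auto simp: zero_le_mult_iff)
qed

lemma convex_on_UNIV_second_deriv_nonneg:
  fixes g g' g'' :: "real \<Rightarrow> real"
  assumes "convex_on UNIV g"
    and "\<And>z. (g has_real_derivative g' z) (at z)"
    and "\<And>z. (g' has_real_derivative g'' z) (at z)"
  shows "g'' z \<ge> 0"
  using mono_on_imp_deriv_nonneg[OF convex_on_UNIV_deriv_mono[OF assms(1,2)] assms(3)] by simp

lemma sep_pen_axis:
  "sep_pen rk (axis k u) = rk k u + (\<Sum>j\<in>UNIV - {k}. rk j 0)"
proof -
  have "sep_pen rk (axis k u) = rk k (axis k u $ k) + (\<Sum>j\<in>UNIV - {k}. rk j (axis k u $ j))"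
    unfolding sep_pen_def by (simp add: sum.remove[of UNIV k])
  also have "(\<Sum>j\<in>UNIV - {k}. rk j (axis k u $ j)) = (\<Sum>j\<in>UNIV - {k}. rk j 0)"
    by (rule sum.cong) (auto simp: axis_def)
  finally show ?thesis
    by (simp add: axis_def)
qed

lemma strongly_convex_sep_pen_component:
  assumes "strongly_convex \<nu> (sep_pen rk)"
  shows "convex_on UNIV (\<lambda>s. rk k s - \<nu> / 2 * s\<^sup>2)"
proof (rule convex_onI)
  fix t x w :: real
  assume t: "0 < t" "t < 1"
  then have "1 - t \<in> {0..1}"
    by simp
  with assms have "sep_pen rk ((1 - t) *\<^sub>R axis k x + (1 - (1 - t)) *\<^sub>R axis k w)
      \<le> (1 - t) * sep_pen rk (axis k x) + (1 - (1 - t)) * sep_pen rk (axis k w)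
         - \<nu> / 2 * (1 - t) * (1 - (1 - t)) * (norm (axis k x - axis k w))\<^sup>2"
    unfolding strongly_convex_def by blast
  moreover have "(1 - t) *\<^sub>R axis k x + (1 - (1 - t)) *\<^sub>R axis k w = axis k ((1 - t) * x + t * w)"
    by (simp add: vec_eq_iff axis_def)
  moreover have "(norm (axis k x - axis k w))\<^sup>2 = (x - w)\<^sup>2"
  proof -
    have "axis k x - axis k w = axis k (x - w)"
      by (simp add: vec_eq_iff axis_def)
    then show ?thesis
      by (simp only: power2_norm_eq_inner inner_axis_axis) (simp add: power2_eq_square)
  qed
  ultimately have "rk k ((1 - t) * x + t * w)
      \<le> (1 - t) * rk k x + t * rk k w - \<nu> / 2 * (1 - t) * t * (x - w)\<^sup>2"
    by (simp add: sep_pen_axis algebra_simps)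
  moreover have "\<nu> / 2 * ((1 - t) * x\<^sup>2 + t * w\<^sup>2) - \<nu> / 2 * ((1 - t) * x + t * w)\<^sup>2
      = \<nu> / 2 * (1 - t) * t * (x - w)\<^sup>2"
    by (simp add: power2_eq_square field_simps)
  moreover have "(1 - t) * (rk k x - \<nu> / 2 * x\<^sup>2) + t * (rk k w - \<nu> / 2 * w\<^sup>2)
      = (1 - t) * rk k x + t * rk k w - \<nu> / 2 * ((1 - t) * x\<^sup>2 + t * w\<^sup>2)"
    by (simp add: field_simps)
  ultimately show "rk k ((1 - t) *\<^sub>R x + t *\<^sub>R w) - \<nu> / 2 * ((1 - t) *\<^sub>R x + t *\<^sub>R w)\<^sup>2
      \<le> (1 - t) * (rk k x - \<nu> / 2 * x\<^sup>2) + t * (rk k w - \<nu> / 2 * w\<^sup>2)"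
    unfolding real_scaleR_def by linarith
qed simp

lemma strongly_convex_sep_pen_second_deriv_ge:
  assumes "strongly_convex \<nu> (sep_pen rk)"
    and r_d1: "\<And>k s. (rk k has_real_derivative r1 k s) (at s)"
    and r_d2: "\<And>k s. (r1 k has_real_derivative r2 k s) (at s)"
  shows "r2 k s \<ge> \<nu>"
proof -
  have "r2 k s - \<nu> \<ge> 0"
  proof (rule convex_on_UNIV_second_deriv_nonneg[OF strongly_convex_sep_pen_component[OF assms(1)],
        where g' = "\<lambda>z. r1 k z - \<nu> * z" and g'' = "\<lambda>z. r2 k z - \<nu>"])
    show "((\<lambda>s. rk k s - \<nu> / 2 * s\<^sup>2) has_real_derivative r1 k z - \<nu> * z) (at z)" for z
      by (auto intro!: derivative_eq_intros r_d1)
    show "((\<lambda>z. r1 k z - \<nu> * z) has_real_derivative r2 k z - \<nu>) (at z)" for z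
      by (auto intro!: derivative_eq_intros r_d2)
  qed
  then show ?thesis
    by simp
qed

subsection \<open>The Hessian-type matrices\<close>

lemma bounded_linear_matrix_vector_mult_left: "bounded_linear (\<lambda>A::real^'m^'n. A *v v)"
proof -
  have "linear (\<lambda>A::real^'m^'n. A *v v)"
    by (rule linearI) (simp_all add: matrix_vector_mult_add_rdistrib scaleR_matrix_vector_assoc)
  then show ?thesis
    by (simp add: linear_conv_bounded_linear)
qed

lemma outer_mult_vec: "outer x *v v = (x \<bullet> v) *\<^sub>R x"
  by (simp add: vec_eq_iff outer_def matrix_vector_mult_def inner_vec_def sum_distrib_left algebra_simps)

lemma diag_mat_mult_vec: "diag_mat d *v v = (\<chi> k. d $ k * v $ k)"
  by (simp add: vec_eq_iff diag_mat_def matrix_vector_mult_def if_distrib[where f="\<lambda>a. a * _"]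
      cong: if_cong)

lemma Gmat_mult_vec:
  "Gmat l2 r2 lam y X S \<beta> *v v =
     (\<Sum>i\<in>S. (l2 (y i) (X $ i \<bullet> \<beta>) * (X $ i \<bullet> v)) *\<^sub>R X $ i)
     + lam *\<^sub>R (\<chi> k. r2 k (\<beta> $ k) * v $ k)"
proof -
  interpret bounded_linear "\<lambda>A::real^'a^'a. A *v v"
    by (rule bounded_linear_matrix_vector_mult_left)
  show ?thesis
    unfolding Gmat_def add sum scaleR by (simp add: outer_mult_vec diag_mat_mult_vec)
qed

lemma Gmat_quadratic_form:
  "v \<bullet> (Gmat l2 r2 lam y X S \<beta> *v v) =
     (\<Sum>i\<in>S. l2 (y i) (X $ i \<bullet> \<beta>) * (X $ i \<bullet> v)\<^sup>2)
     + lam * (\<Sum>k\<in>UNIV. r2 k (\<beta> $ k) * (v $ k)\<^sup>2)"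
proof -
  have "v \<bullet> (\<Sum>i\<in>S. (l2 (y i) (X $ i \<bullet> \<beta>) * (X $ i \<bullet> v)) *\<^sub>R X $ i)
      = (\<Sum>i\<in>S. l2 (y i) (X $ i \<bullet> \<beta>) * (X $ i \<bullet> v)\<^sup>2)"
    by (simp add: inner_sum_right inner_commute[of v] power2_eq_square mult.assoc)
  moreover have "v \<bullet> (\<chi> k. r2 k (\<beta> $ k) * v $ k) = (\<Sum>k\<in>UNIV. r2 k (\<beta> $ k) * (v $ k)\<^sup>2)"
    by (simp add: inner_vec_def power2_eq_square algebra_simps)
  ultimately show ?thesis
    by (simp add: Gmat_mult_vec inner_add_right)
qed

lemma Gmat_quadratic_form_ge:
  assumes "lam \<ge> 0" and "\<And>u z. l2 u z \<ge> 0" and "\<And>k s. r2 k s \<ge> \<nu>"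
  shows "v \<bullet> (Gmat l2 r2 lam y X S \<beta> *v v) \<ge> lam * \<nu> * (norm v)\<^sup>2"
proof -
  have "(\<Sum>i\<in>S. l2 (y i) (X $ i \<bullet> \<beta>) * (X $ i \<bullet> v)\<^sup>2) \<ge> 0"
    by (simp add: assms(2) sum_nonneg)
  moreover have "\<nu> * (norm v)\<^sup>2 \<le> (\<Sum>k\<in>UNIV. r2 k (\<beta> $ k) * (v $ k)\<^sup>2)"
  proof -
    have "\<nu> * (norm v)\<^sup>2 = (\<Sum>k\<in>UNIV. \<nu> * (v $ k)\<^sup>2)"
      unfolding power2_norm_eq_inner by (simp add: inner_vec_def sum_distrib_left power2_eq_square)
    also have "\<dots> \<le> (\<Sum>k\<in>UNIV. r2 k (\<beta> $ k) * (v $ k)\<^sup>2)"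
      by (simp add: assms(3) mult_right_mono sum_mono)
    finally show ?thesis .
  qed
  then have "lam * (\<nu> * (norm v)\<^sup>2) \<le> lam * (\<Sum>k\<in>UNIV. r2 k (\<beta> $ k) * (v $ k)\<^sup>2)"
    using assms(1) by (rule mult_left_mono)
  ultimately show ?thesis
    unfolding Gmat_quadratic_form mult.assoc by linarith
qed

subsection \<open>Stationarity of the minimizers\<close>

definition objective_grad ::
  "('y \<Rightarrow> real \<Rightarrow> real) \<Rightarrow> ('p::finite \<Rightarrow> real \<Rightarrow> real) \<Rightarrow> real \<Rightarrow>
   ('n::finite \<Rightarrow> 'y) \<Rightarrow> real^'p^'n \<Rightarrow> 'n set \<Rightarrow> real^'p \<Rightarrow> real^'p" where
  "objective_grad l1 r1 lam y X S \<beta> =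
     (\<Sum>i\<in>S. l1 (y i) (X $ i \<bullet> \<beta>) *\<^sub>R X $ i) + lam *\<^sub>R (\<chi> k. r1 k (\<beta> $ k))"

lemma objective_grad_split:
  "objective_grad l1 r1 lam y X UNIV \<beta>
     = (\<Sum>i\<in>M. l1 (y i) (X $ i \<bullet> \<beta>) *\<^sub>R X $ i) + objective_grad l1 r1 lam y X (- M) \<beta>"
proof -
  have "(\<Sum>i\<in>M \<union> - M. l1 (y i) (X $ i \<bullet> \<beta>) *\<^sub>R X $ i)
      = (\<Sum>i\<in>M. l1 (y i) (X $ i \<bullet> \<beta>) *\<^sub>R X $ i) + (\<Sum>i\<in>- M. l1 (y i) (X $ i \<bullet> \<beta>) *\<^sub>R X $ i)"
    by (rule sum.union_disjoint) auto
  then show ?thesis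
    by (simp add: objective_grad_def add.assoc)
qed

lemma objective_has_partial_derivative:
  assumes l_d1: "\<And>u z. (l u has_real_derivative l1 u z) (at z)"
    and r_d1: "\<And>k s. (rk k has_real_derivative r1 k s) (at s)"
  shows "((\<lambda>s. objective l rk lam y X S (\<beta> + s *\<^sub>R axis k 1)) has_real_derivative
           objective_grad l1 r1 lam y X S \<beta> $ k) (at 0)"
proof -
  let ?e = "\<lambda>j. if j = k then 1 else 0 :: real"
  have objective_line: "objective l rk lam y X S (\<beta> + s *\<^sub>R axis k 1)
      = (\<Sum>i\<in>S. l (y i) (X $ i \<bullet> \<beta> + s * X $ i $ k)) + lam * (\<Sum>j\<in>UNIV. rk j (\<beta> $ j + s * ?e j))"
    for s
    unfolding objective_def sep_pen_def by (simp add: inner_add_right inner_axis) (simp add: axis_def)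
  have "((\<lambda>s. (\<Sum>i\<in>S. l (y i) (X $ i \<bullet> \<beta> + s * X $ i $ k))
                + lam * (\<Sum>j\<in>UNIV. rk j (\<beta> $ j + s * ?e j))) has_real_derivative
         (\<Sum>i\<in>S. l1 (y i) (X $ i \<bullet> \<beta> + 0 * X $ i $ k) * X $ i $ k)
         + lam * (\<Sum>j\<in>UNIV. r1 j (\<beta> $ j + 0 * ?e j) * ?e j)) (at 0)"
  proof (intro DERIV_add DERIV_cmult DERIV_sum)
    show "((\<lambda>s. l (y i) (X $ i \<bullet> \<beta> + s * X $ i $ k)) has_real_derivative
         l1 (y i) (X $ i \<bullet> \<beta> + 0 * X $ i $ k) * X $ i $ k) (at 0)" for i
      by (rule DERIV_chain2[OF l_d1]) (auto intro!: derivative_eq_intros)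
    show "((\<lambda>s. rk j (\<beta> $ j + s * ?e j)) has_real_derivative r1 j (\<beta> $ j + 0 * ?e j) * ?e j) (at 0)"
      for j
      by (rule DERIV_chain2[OF r_d1]) (auto intro!: derivative_eq_intros)
  qed
  then show ?thesis
    unfolding objective_line by (simp add: objective_grad_def if_distrib cong: if_cong)
qed

lemma objective_grad_eq_0_if_minimizer:
  assumes "\<And>u z. (l u has_real_derivative l1 u z) (at z)"
    and "\<And>k s. (rk k has_real_derivative r1 k s) (at s)"
    and minimizer: "\<And>b. objective l rk lam y X S \<beta> \<le> objective l rk lam y X S b"
  shows "objective_grad l1 r1 lam y X S \<beta> = 0"
  unfolding vec_eq_iff zero_index
proof
  fix k
  show "objective_grad l1 r1 lam y X S \<beta> $ k = 0"
    by (rule DERIV_local_min[OF objective_has_partial_derivative[OF assms(1,2)], where d = 1])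
      (simp_all add: minimizer)
qed

subsection \<open>Averaging the Hessian along a segment\<close>

lemma integrable_derivative_along_line:
  fixes g g' :: "real \<Rightarrow> real"
  assumes deriv: "\<And>z. (g has_real_derivative g' z) (at z)"
  shows "(\<lambda>t. g' (a + t * c)) integrable_on {0..1}"
proof (cases "c = 0")
  case True
  then show ?thesis
    by (simp add: integrable_const_ivl)
next
  case False
  have "((\<lambda>t. g (a + t * c)) has_vector_derivative g' (a + t * c) * c) (at t within {0..1})" for t
    unfolding has_real_derivative_iff_has_vector_derivative[symmetric]
    by (rule DERIV_chain2[OF deriv]) (auto intro!: derivative_eq_intros)
  then have "(\<lambda>t. g' (a + t * c) * c) integrable_on {0..1}"
    using fundamental_theorem_of_calculus[of 0 1 "\<lambda>t. g (a + t * c)" "\<lambda>t. g' (a + t * c) * c"]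
    by (auto simp: integrable_on_def)
  with False show ?thesis
    by simp
qed

lemma has_vector_derivative_along_line_scaleR:
  fixes g g' :: "real \<Rightarrow> real" and v :: "'a::real_normed_vector"
  assumes deriv: "\<And>z. (g has_real_derivative g' z) (at z)"
  shows "((\<lambda>t. g (a + t * c) *\<^sub>R v) has_vector_derivative (g' (a + t * c) * c) *\<^sub>R v) (at t within T)"
proof -
  have "((\<lambda>t. g (a + t * c)) has_real_derivative g' (a + t * c) * c) (at t within T)"
    by (rule DERIV_chain2[OF deriv]) (auto intro!: derivative_eq_intros)
  from has_vector_derivative_scaleR[OF this has_vector_derivative_const[of v]] show ?thesis
    by simp
qed

lemma vec_lambda_eq_sum_axis: "(\<chi> k. f k) = (\<Sum>k\<in>UNIV. f k *\<^sub>R axis k (1::real))"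
  by (simp add: vec_eq_iff axis_def if_distrib[where f="\<lambda>a. _ * a"] cong: if_cong)

lemma diag_mat_eq_sum_axis: "diag_mat (\<chi> k. f k) = (\<Sum>k\<in>UNIV. f k *\<^sub>R diag_mat (axis k (1::real)))"
  by (simp add: vec_eq_iff diag_mat_def axis_def if_distrib[where f="\<lambda>a. _ * a"] cong: if_cong)

lemma objective_grad_has_vector_derivative_along_line:
  assumes l_d2: "\<And>u z. (l1 u has_real_derivative l2 u z) (at z)"
    and r_d2: "\<And>k s. (r1 k has_real_derivative r2 k s) (at s)"
  shows "((\<lambda>t. objective_grad l1 r1 lam y X S (b + t *\<^sub>R e)) has_vector_derivative
           Gmat l2 r2 lam y X S (b + t *\<^sub>R e) *v e) (at t within T)"
proof -
  have grad_line: "objective_grad l1 r1 lam y X S (b + t *\<^sub>R e)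
      = (\<Sum>i\<in>S. l1 (y i) (X $ i \<bullet> b + t * (X $ i \<bullet> e)) *\<^sub>R X $ i)
        + lam *\<^sub>R (\<Sum>k\<in>UNIV. r1 k (b $ k + t * e $ k) *\<^sub>R axis k 1)" for t
    unfolding objective_grad_def vec_lambda_eq_sum_axis[of "\<lambda>k. r1 k ((b + t *\<^sub>R e) $ k)"]
    by (simp add: inner_add_right)
  have "Gmat l2 r2 lam y X S (b + t *\<^sub>R e) *v e
      = (\<Sum>i\<in>S. (l2 (y i) (X $ i \<bullet> b + t * (X $ i \<bullet> e)) * (X $ i \<bullet> e)) *\<^sub>R X $ i)
        + lam *\<^sub>R (\<Sum>k\<in>UNIV. (r2 k (b $ k + t * e $ k) * e $ k) *\<^sub>R axis k 1)"
    unfolding Gmat_mult_vec vec_lambda_eq_sum_axis[of "\<lambda>k. r2 k ((b + t *\<^sub>R e) $ k) * e $ k"]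
    by (simp add: inner_add_right)
  then show ?thesis
    unfolding grad_line
    by (simp only:) (intro has_vector_derivative_add has_vector_derivative_sum
        has_vector_derivative_along_line_scaleR[OF l_d2] has_vector_derivative_along_line_scaleR[OF r_d2]
        bounded_linear.has_vector_derivative[OF bounded_linear_scaleR_right])
qed

lemma Gmat_integrable_on_segment:
  assumes l_d2: "\<And>u z. (l1 u has_real_derivative l2 u z) (at z)"
    and r_d2: "\<And>k s. (r1 k has_real_derivative r2 k s) (at s)"
  shows "(\<lambda>t. Gmat l2 r2 lam y X S (t *\<^sub>R a + (1 - t) *\<^sub>R b)) integrable_on {0..1}"
proof -
  have "Gmat l2 r2 lam y X S (t *\<^sub>R a + (1 - t) *\<^sub>R b)
     = (\<Sum>i\<in>S. l2 (y i) (X $ i \<bullet> b + t * (X $ i \<bullet> (a - b))) *\<^sub>R outer (X $ i))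
       + lam *\<^sub>R (\<Sum>k\<in>UNIV. r2 k (b $ k + t * (a - b) $ k) *\<^sub>R diag_mat (axis k 1))" for t
    unfolding Gmat_def diag_mat_eq_sum_axis by (simp add: inner_diff_right inner_add_right algebra_simps)
  then show ?thesis
    by (simp only:) (intro integrable_add integrable_sum integrable_cmul integrable_on_scaleR_left
        integrable_derivative_along_line[OF l_d2] integrable_derivative_along_line[OF r_d2] finite)
qed

lemma objective_grad_diff_eq_integral_Gmat:
  assumes l_d2: "\<And>u z. (l1 u has_real_derivative l2 u z) (at z)"
    and r_d2: "\<And>k s. (r1 k has_real_derivative r2 k s) (at s)"
  shows "integral {0..1} (\<lambda>t. Gmat l2 r2 lam y X S (t *\<^sub>R a + (1 - t) *\<^sub>R b)) *v (a - b)
           = objective_grad l1 r1 lam y X S a - objective_grad l1 r1 lam y X S b"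
proof -
  let ?G = "\<lambda>t. Gmat l2 r2 lam y X S (t *\<^sub>R a + (1 - t) *\<^sub>R b)"
  have segment: "t *\<^sub>R a + (1 - t) *\<^sub>R b = b + t *\<^sub>R (a - b)" for t
    by (simp add: algebra_simps)
  have "((\<lambda>t. ?G t *v (a - b)) has_integral
      objective_grad l1 r1 lam y X S (b + 1 *\<^sub>R (a - b))
        - objective_grad l1 r1 lam y X S (b + 0 *\<^sub>R (a - b))) {0..1}"
    unfolding segment
    by (intro fundamental_theorem_of_calculus objective_grad_has_vector_derivative_along_line[OF l_d2 r_d2])
      simp
  moreover have "((\<lambda>t. ?G t *v (a - b)) has_integral integral {0..1} ?G *v (a - b)) {0..1}"
    using has_integral_linear[OF integrable_integral[OF Gmat_integrable_on_segment[OF l_d2 r_d2]]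
        bounded_linear_matrix_vector_mult_left]
    by (simp add: o_def)
  ultimately show ?thesis
    by (simp add: has_integral_unique)
qed

lemma invertible_integral_uniformly_posdef:
  fixes f :: "real \<Rightarrow> real^'n^'n"
  assumes int: "f integrable_on {a..b}" and "a < b" and "c > 0"
    and posdef: "\<And>t v. t \<in> {a..b} \<Longrightarrow> v \<bullet> (f t *v v) \<ge> c * (norm v)\<^sup>2"
  shows "invertible (integral {a..b} f)"
  unfolding invertible_left_inverse matrix_left_invertible_ker
proof (intro allI impI)
  fix v
  assume kernel: "integral {a..b} f *v v = 0"
  have "bounded_linear (\<lambda>A::real^'n^'n. v \<bullet> (A *v v))"
    by (rule bounded_linear_compose[OF bounded_linear_inner_right
          bounded_linear_matrix_vector_mult_left])
  from has_integral_linear[OF integrable_integral[OF int] this]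
  have "((\<lambda>t. v \<bullet> (f t *v v)) has_integral 0) {a..b}"
    using kernel by (simp add: o_def)
  moreover have "((\<lambda>t. c * (norm v)\<^sup>2) has_integral (b - a) * (c * (norm v)\<^sup>2)) {a..b}"
    using has_integral_const_real[of "c * (norm v)\<^sup>2" a b] \<open>a < b\<close> by simp
  ultimately have "(b - a) * (c * (norm v)\<^sup>2) \<le> 0"
    using posdef by (auto intro: has_integral_le)
  with \<open>a < b\<close> \<open>c > 0\<close> show "v = 0"
    by (simp add: mult_le_0_iff)
qed

lemma matrix_inv_mult_vec_eq:
  fixes A :: "real^'n^'n"
  assumes "invertible A" and "A *v x = b"
  shows "x = matrix_inv A *v b"
proof -
  have "matrix_inv A ** A = mat 1"
    using someI_ex[OF assms(1)[unfolded invertible_def]] unfolding matrix_inv_def by blast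
  then show ?thesis
    using assms(2) by (metis matrix_vector_mul_assoc matrix_vector_mul_lid)
qed

lemma diff_eq_matrix_inv_integral_Gmat:
  assumes l_d2: "\<And>u z. (l1 u has_real_derivative l2 u z) (at z)"
    and r_d2: "\<And>k s. (r1 k has_real_derivative r2 k s) (at s)"
    and "lam > 0" and "\<nu> > 0"
    and "\<And>u z. l2 u z \<ge> 0" and "\<And>k s. r2 k s \<ge> \<nu>"
  shows "b - a = matrix_inv (integral {0..1} (\<lambda>t. Gmat l2 r2 lam y X S (t *\<^sub>R a + (1 - t) *\<^sub>R b)))
           *v (objective_grad l1 r1 lam y X S b - objective_grad l1 r1 lam y X S a)"
proof (rule matrix_inv_mult_vec_eq)
  let ?Gbar = "integral {0..1} (\<lambda>t. Gmat l2 r2 lam y X S (t *\<^sub>R a + (1 - t) *\<^sub>R b))"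
  show "invertible ?Gbar"
    using assms by (intro invertible_integral_uniformly_posdef[where c = "lam * \<nu>"]
        Gmat_integrable_on_segment Gmat_quadratic_form_ge) auto
  have "?Gbar *v (b - a) = - (?Gbar *v (a - b))"
    by (simp add: matrix_vector_mult_diff_distrib)
  also have "\<dots> = objective_grad l1 r1 lam y X S b - objective_grad l1 r1 lam y X S a"
    by (simp add: objective_grad_diff_eq_integral_Gmat[OF l_d2 r_d2])
  finally show "?Gbar *v (b - a) = objective_grad l1 r1 lam y X S b - objective_grad l1 r1 lam y X S a" .
qed

theorem lemma10:
  fixes l l1 l2 :: "'y \<Rightarrow> real \<Rightarrow> real"
    and rk r1 r2 :: "'p::finite \<Rightarrow> real \<Rightarrow> real"
    and y :: "'n::finite \<Rightarrow> 'y"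
    and X :: "real^'p^'n"
    and lam \<nu> :: real
    and M :: "'n set"
    and bh bM :: "real^'p"
  assumes lam_pos: "lam > 0"
    and l_nonneg: "\<And>u z. l u z \<ge> 0"
    and r_nonneg: "\<And>\<beta>. sep_pen rk \<beta> \<ge> 0"
    and l_d1: "\<And>u z. (l u has_real_derivative l1 u z) (at z)"
    and l_d2: "\<And>u z. (l1 u has_real_derivative l2 u z) (at z)"
    and r_d1: "\<And>k s. (rk k has_real_derivative r1 k s) (at s)"
    and r_d2: "\<And>k s. (r1 k has_real_derivative r2 k s) (at s)"
    and l_convex: "\<And>u. convex_on UNIV (l u)"
    and nu_pos: "\<nu> > 0"
    and r_strong: "strongly_convex \<nu> (sep_pen rk)"
    and bh_min: "\<And>\<beta>. objective l rk lam y X UNIV bh \<le> objective l rk lam y X UNIV \<beta>"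
    and bM_min: "\<And>\<beta>. objective l rk lam y X (- M) bM \<le> objective l rk lam y X (- M) \<beta>"
  shows "bM - bh
           = matrix_inv (integral {0..1}
               (\<lambda>t. Gmat l2 r2 lam y X UNIV (t *\<^sub>R bh + (1 - t) *\<^sub>R bM)))
             *v (\<Sum>i\<in>M. l1 (y i) (X $ i \<bullet> bM) *\<^sub>R X $ i)
       \<and> bM - bh
           = matrix_inv (integral {0..1}
               (\<lambda>t. Gmat l2 r2 lam y X (- M) (t *\<^sub>R bh + (1 - t) *\<^sub>R bM)))
             *v (\<Sum>i\<in>M. l1 (y i) (X $ i \<bullet> bh) *\<^sub>R X $ i)"
proof -
  have l2_nonneg: "l2 u z \<ge> 0" for u z
    by (rule convex_on_UNIV_second_deriv_nonneg[OF l_convex l_d1 l_d2])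
  have r2_ge: "r2 k s \<ge> \<nu>" for k s
    by (rule strongly_convex_sep_pen_second_deriv_ge[OF r_strong r_d1 r_d2])
  have diff_eq: "bM - bh
      = matrix_inv (integral {0..1} (\<lambda>t. Gmat l2 r2 lam y X S (t *\<^sub>R bh + (1 - t) *\<^sub>R bM)))
        *v (objective_grad l1 r1 lam y X S bM - objective_grad l1 r1 lam y X S bh)" for S
    using l_d2 r_d2 lam_pos nu_pos l2_nonneg r2_ge by (rule diff_eq_matrix_inv_integral_Gmat)
  have grad_bh: "objective_grad l1 r1 lam y X UNIV bh = 0"
    by (rule objective_grad_eq_0_if_minimizer[OF l_d1 r_d1 bh_min])
  have grad_bM: "objective_grad l1 r1 lam y X (- M) bM = 0"
    by (rule objective_grad_eq_0_if_minimizer[OF l_d1 r_d1 bM_min])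
  have "objective_grad l1 r1 lam y X UNIV bM - objective_grad l1 r1 lam y X UNIV bh
      = (\<Sum>i\<in>M. l1 (y i) (X $ i \<bullet> bM) *\<^sub>R X $ i)"
    using grad_bh grad_bM by (simp add: objective_grad_split[where M = M])
  moreover have "objective_grad l1 r1 lam y X (- M) bM - objective_grad l1 r1 lam y X (- M) bh
      = (\<Sum>i\<in>M. l1 (y i) (X $ i \<bullet> bh) *\<^sub>R X $ i)"
    using grad_bh grad_bM by (simp add: objective_grad_split[where M = M] add_eq_0_iff)
  ultimately show ?thesis
    using diff_eq[of UNIV] diff_eq[of "- M"] by simp
qed

end
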